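(* Consider the iterates of the AdaSMSAG method described in the context, and let $x^*$ be an optimal solution of $\min_{x\in X}\psi(x)$. Suppose that, for a given $k\ge1$, $\alpha_k\beta_k-\theta_k\le 0$ and $\beta_k-L_k>0$, where $L_k:=L_f+L/\mu_k$. Then $$\Gamma_k\le\alpha_k\theta_k\left(D_{k-1}^2-D_k^2\right)+\frac{\|\delta_k\|^2}{2(\beta_k-L_k)}+\alpha_k\langle\delta_k,\;x^*-z_{k-1}\rangle.$$
   Context: Setting: $X\subseteq\mathbb{R}^n$ is a nonempty closed convex set; $\psi=f+h$ where $f(x)=E[F(x,\xi)]$, $h(x)=E[H(x,\xi)]$, $\xi$ a random vector supported on $\Xi\subseteq\mathbb{R}^d$, $F(\cdot,\xi)$ convex with Lipschitz continuous gradient and $H(\cdot,\xi)$ convex (possibly nonsmooth) for every $\xi$; $f$ is convex and differentiable with $\nabla f$ Lipschitz on $X$ with constant $L_f$. $\{\tilde h_\mu\}_{\mu\in(0,\bar\mu]}$ is a smoothing function of $h$ on $X$: each $\tilde h_\mu$ is continuously differentiable and convex on $X$; $\tilde h_\mu(z)\to h(x)$ as $z\to x,\mu\downarrow0$; $|\tilde h_{\mu_2}(x)-\tilde h_{\mu_1}(x)|\le\kappa|\mu_1-\mu_2|$ for all $x\in X$, $\mu_1,\mu_2\in(0,\bar\mu]$ ($\kappa>0$); and $\nabla\tilde h_\mu$ is $L/\mu$-Lipschitz on $X$ ($L>0$). Set $\tilde\psi_\mu:=f+\tilde h_\mu$. A stochastic first-order oracle returns, for input $x\in X$, $\mu>0$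 and a sample $\xi$, a vector $\nabla\tilde\Psi_\mu(x,\xi)$. AdaSMSAG method: inputs $N\ge1$, batch sizes $m_k\ge 1$, $\alpha_k\in(0,1)$, $c>0$, $\mu_0\in(0,\bar\mu]$, $\beta_k>0$, $\theta_k>0$, $z_0=y_0\in X$. For $k=1,\dots,N$: $x_k=\alpha_k z_{k-1}+(1-\alpha_k)y_{k-1}$; $\mu_k=\frac{c\mu_0}{k+c}$; draw samples $\xi_{k,1},\dots,\xi_{k,m_k}$ and set $G_k:=\frac1{m_k}\sum_{i=1}^{m_k}\nabla\tilde\Psi_{\mu_k}(x_k,\xi_{k,i})$; $y_k=\arg\min_{y\in X}\{\langle G_k,y-x_k\rangle+\frac{\beta_k}{2}\|y-x_k\|^2\}$; $z_k=\arg\min_{x\in X}\{\langle G_k,x-x_k\rangle+\frac{\theta_k}{2}\|x-z_{k-1}\|^2\}$. Notation: $\delta_k:=G_k-\nabla\tilde\psi_{\mu_k}(x_k)$; $D_k^2:=\frac{\|x^*-z_k\|^2}{2}$ for $k\ge0$; $\Delta_{\mu_k}:=\tilde\psi_{\mu_k}(y_k)-\tilde\psi_{\mu_k}(x^* )$ for $k\ge0$; $\Gamma_k:=\Delta_{\mu_k}-(1-\alpha_k)\Delta_{\mu_{k-1}}-2\kappa(1-\alpha_k)(\mu_{k-1}-\mu_k)$. *)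

theory Defs
  imports "HOL-Analysis.Analysis"
begin

end

theory Submission
  imports Defs
begin

text \<open>Write \<open>P = f + h\<^sub>\<mu>\<close> with \<open>\<mu> = \<mu>\<^sub>k\<close>; its gradient is \<open>L\<^sub>k\<close>-Lipschitz. The descent lemma and
  Young's inequality bound \<open>P(y\<^sub>k)\<close> by the \<open>\<beta>\<^sub>k\<close>-prox objective at \<open>y\<^sub>k\<close> plus
  \<open>\<parallel>\<delta>\<^sub>k\<parallel>\<^sup>2/(2(\<beta>\<^sub>k - L\<^sub>k))\<close>. Testing the minimality of \<open>y\<^sub>k\<close> at
  \<open>\<alpha>\<^sub>k z\<^sub>k + (1 - \<alpha>\<^sub>k) y\<^sub>k\<^sub>-\<^sub>1\<close>, whose distance to \<open>x\<^sub>k\<close> is \<open>\<alpha>\<^sub>k\<parallel>z\<^sub>k - z\<^sub>k\<^sub>-\<^sub>1\<parallel>\<close>, and using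
  \<open>\<alpha>\<^sub>k\<beta>\<^sub>k \<le> \<theta>\<^sub>k\<close>, turns this into \<open>\<alpha>\<^sub>k\<close> times the \<open>\<theta>\<^sub>k\<close>-prox objective at \<open>z\<^sub>k\<close>, which the
  three-point property of the prox step bounds in terms of \<open>x\<^sup>*\<close>. Convexity of \<open>P\<close> at
  \<open>x\<^sub>k = \<alpha>\<^sub>k z\<^sub>k\<^sub>-\<^sub>1 + (1 - \<alpha>\<^sub>k) y\<^sub>k\<^sub>-\<^sub>1\<close> then produces \<open>\<alpha>\<^sub>k P(x\<^sup>*) + (1 - \<alpha>\<^sub>k) P(y\<^sub>k\<^sub>-\<^sub>1)\<close>, and
  the \<open>\<kappa>\<close>-bound converts \<open>P(y\<^sub>k\<^sub>-\<^sub>1) - P(x\<^sup>*)\<close> into \<open>\<Delta>\<^sub>\<mu>\<^sub>k\<^sub>-\<^sub>1\<close> at the cost of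
  \<open>2\<kappa>(\<mu>\<^sub>k\<^sub>-\<^sub>1 - \<mu>\<^sub>k)\<close>.\<close>

lemma has_derivative_along_segment:
  fixes F :: "'a::real_inner \<Rightarrow> real"
  assumes X: "convex X" "x \<in> X" "u \<in> X" and t: "t \<in> {0..1}"
    and F: "(F has_derivative (\<lambda>d. g \<bullet> d)) (at ((1 - t) *\<^sub>R x + t *\<^sub>R u) within X)"
  shows "((\<lambda>t. F ((1 - t) *\<^sub>R x + t *\<^sub>R u)) has_derivative (\<lambda>s. s * (g \<bullet> (u - x))))
           (at t within {0..1})"
proof -
  let ?p = "\<lambda>t. (1 - t) *\<^sub>R x + t *\<^sub>R u"
  have "?p ` {0..1} \<subseteq> X"
    using X by (auto intro: convexD_alt)
  with F have "(F has_derivative (\<lambda>d. g \<bullet> d)) (at (?p t) within ?p ` {0..1})"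
    by (rule has_derivative_subset)
  moreover have "(?p has_derivative (\<lambda>s. s *\<^sub>R (u - x))) (at t within {0..1})"
    by (auto intro!: derivative_eq_intros simp: algebra_simps)
  ultimately show ?thesis
    by (auto dest: has_derivative_in_compose simp: algebra_simps)
qed

lemma has_field_derivative_le_of_increment_le:
  fixes g :: "real \<Rightarrow> real"
  assumes "(g has_field_derivative D) (at 0 within {0..1})"
    and "\<And>t. t \<in> {0<..1} \<Longrightarrow> g t - g 0 \<le> t * C"
  shows "D \<le> C"
proof (rule tendsto_upperbound)
  show "((\<lambda>t. (g t - g 0) / (t - 0)) \<longlongrightarrow> D) (at 0 within {0..1})"
    using assms(1) by (simp add: has_field_derivative_iff)
  have "eventually (\<lambda>t. t \<in> {0<..1}) (at (0::real) within {0..1})"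
    unfolding eventually_at_filter by (auto intro!: always_eventually)
  then show "eventually (\<lambda>t. (g t - g 0) / (t - 0) \<le> C) (at 0 within {0..1})"
    by eventually_elim (use assms(2) in \<open>auto simp: divide_simps mult.commute\<close>)
  show "at (0::real) within {0..1} \<noteq> bot"
    by (simp add: trivial_limit_within)
qed

lemma convex_on_imp_above_gradient:
  fixes F :: "'a::real_inner \<Rightarrow> real"
  assumes F: "convex_on X F" and X: "convex X" "x \<in> X" "u \<in> X"
    and dF: "(F has_derivative (\<lambda>d. g \<bullet> d)) (at x within X)"
  shows "F x + g \<bullet> (u - x) \<le> F u"
proof -
  let ?p = "\<lambda>t. (1 - t) *\<^sub>R x + t *\<^sub>R u"
  have "((\<lambda>t. F (?p t)) has_field_derivative g \<bullet> (u - x)) (at 0 within {0..1})"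
    using has_derivative_along_segment[OF X, of 0 F g] dF
    by (simp add: has_field_derivative_def mult.commute[of _ "g \<bullet> (u - x)"])
  moreover have "F (?p t) - F (?p 0) \<le> t * (F u - F x)" if "t \<in> {0<..1}" for t
    using convex_onD[OF F, of t x u] that X by (simp add: algebra_simps)
  ultimately have "g \<bullet> (u - x) \<le> F u - F x"
    by (rule has_field_derivative_le_of_increment_le)
  then show ?thesis by simp
qed

lemma Lipschitz_gradient_quadratic_upper_bound:
  fixes F :: "'a::real_inner \<Rightarrow> real"
  assumes X: "convex X" "x \<in> X" "y \<in> X"
    and dF: "\<And>v. v \<in> X \<Longrightarrow> (F has_derivative (\<lambda>d. g v \<bullet> d)) (at v within X)"
    and g: "\<And>v w. v \<in> X \<Longrightarrow> w \<in> X \<Longrightarrow> norm (g v - g w) \<le> M * norm (v - w)"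
  shows "F y \<le> F x + g x \<bullet> (y - x) + M / 2 * (norm (y - x))\<^sup>2"
proof -
  define p where "p t = (1 - t) *\<^sub>R x + t *\<^sub>R y" for t
  define e where "e = y - x"
  define r where "r t = F (p t) - t * (g x \<bullet> e) - M / 2 * t\<^sup>2 * (norm e)\<^sup>2" for t
  have pX: "p t \<in> X" if "t \<in> {0..1}" for t
    using X that by (auto simp: p_def intro: convexD_alt)
  have r': "(r has_derivative (\<lambda>s. s * (g (p t) \<bullet> e - g x \<bullet> e - M * t * (norm e)\<^sup>2)))
          (at t within {0..1})" if "t \<in> {0..1}" for t
  proof -
    have "((\<lambda>t. F (p t)) has_derivative (\<lambda>s. s * (g (p t) \<bullet> e))) (at t within {0..1})"
      using has_derivative_along_segment[OF X that dF[OF pX[OF that], unfolded p_def]]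
      by (simp add: p_def e_def)
    then show ?thesis
      unfolding r_def by (auto intro!: derivative_eq_intros simp: algebra_simps)
  qed
  obtain t where t: "t \<in> {0..1}"
    and r_diff: "r 1 - r 0 = g (p t) \<bullet> e - g x \<bullet> e - M * t * (norm e)\<^sup>2"
    using mvt_very_simple[OF zero_le_one r'] by auto
  have "g (p t) \<bullet> e - g x \<bullet> e \<le> norm (g (p t) - g x) * norm e"
    by (metis inner_diff_left norm_cauchy_schwarz)
  also have "\<dots> \<le> M * norm (p t - x) * norm e"
    by (rule mult_right_mono[OF g[OF pX[OF t] X(2)]]) simp
  also have "\<dots> = M * t * (norm e)\<^sup>2"
  proof -
    have "p t - x = t *\<^sub>R e" by (simp add: p_def e_def algebra_simps)
    then show ?thesis using t by (simp add: power2_eq_square)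
  qed
  finally have "r 1 \<le> r 0"
    using r_diff by simp
  then show ?thesis
    by (simp add: r_def p_def e_def)
qed

lemma inner_le_Young:
  fixes d v :: "'a::real_inner"
  assumes "q > 0"
  shows "d \<bullet> v \<le> (norm d)\<^sup>2 / (2 * q) + q / 2 * (norm v)\<^sup>2"
proof -
  have "0 \<le> (norm d - q * norm v)\<^sup>2" by simp
  then have "norm d * norm v \<le> (norm d)\<^sup>2 / (2 * q) + q / 2 * (norm v)\<^sup>2"
    using assms by (simp add: field_simps power2_eq_square)
  with norm_cauchy_schwarz[of d v] show ?thesis by linarith
qed

text \<open>The error \<open>G - \<nabla>F(x)\<close> of the gradient estimate is absorbed by the surplus \<open>\<beta> - M\<close>
  of curvature.\<close>

lemma inexact_prox_gradient_step_bound: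
  fixes F :: "'a::real_inner \<Rightarrow> real"
  assumes X: "convex X" "x \<in> X" "y \<in> X" "v \<in> X"
    and dF: "\<And>v. v \<in> X \<Longrightarrow> (F has_derivative (\<lambda>d. g v \<bullet> d)) (at v within X)"
    and g: "\<And>v w. v \<in> X \<Longrightarrow> w \<in> X \<Longrightarrow> norm (g v - g w) \<le> M * norm (v - w)"
    and M: "\<beta> - M > 0"
    and y_min: "G \<bullet> (y - x) + \<beta> / 2 * (norm (y - x))\<^sup>2 \<le> G \<bullet> (v - x) + \<beta> / 2 * (norm (v - x))\<^sup>2"
  shows "F y \<le> F x + (G \<bullet> (v - x) + \<beta> / 2 * (norm (v - x))\<^sup>2)
                + (norm (G - g x))\<^sup>2 / (2 * (\<beta> - M))"
proof -
  have "F y \<le> F x + g x \<bullet> (y - x) + M / 2 * (norm (y - x))\<^sup>2"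
    using Lipschitz_gradient_quadratic_upper_bound[OF X(1-3) dF g] .
  moreover have "(G - g x) \<bullet> (x - y) \<le> (norm (G - g x))\<^sup>2 / (2 * (\<beta> - M))
                   + (\<beta> - M) / 2 * (norm (y - x))\<^sup>2"
    using inner_le_Young[OF M, of "G - g x" "x - y"] by (simp add: norm_minus_commute)
  ultimately show ?thesis
    using y_min by (simp add: algebra_simps diff_divide_distrib)
qed

lemma prox_three_point_inequality:
  fixes G :: "'a::real_inner"
  assumes X: "convex X" "z \<in> X" "u \<in> X" and th: "th > 0"
    and z_min: "\<forall>v\<in>X. G \<bullet> (z - x) + th / 2 * (norm (z - w))\<^sup>2
                        \<le> G \<bullet> (v - x) + th / 2 * (norm (v - w))\<^sup>2"
  shows "G \<bullet> (z - x) + th / 2 * (norm (z - w))\<^sup>2 + th / 2 * (norm (u - z))\<^sup>2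
          \<le> G \<bullet> (u - x) + th / 2 * (norm (u - w))\<^sup>2"
proof -
  define a where "a = G \<bullet> (u - z) + th * ((z - w) \<bullet> (u - z))"
  define b where "b = th / 2 * (norm (u - z))\<^sup>2"
  have expand: "G \<bullet> ((z + t *\<^sub>R (u - z)) - x) + th / 2 * (norm ((z + t *\<^sub>R (u - z)) - w))\<^sup>2
      = G \<bullet> (z - x) + th / 2 * (norm (z - w))\<^sup>2 + t * a + t * t * b" for t
    by (simp add: a_def b_def power2_norm_eq_inner inner_commute algebra_simps)
  \<comment> \<open>first-order optimality of \<open>z\<close> in the direction \<open>u - z\<close>\<close>
  have "0 \<le> a"
  proof (rule tendsto_lowerbound)
    show "((\<lambda>t. a + t * b) \<longlongrightarrow> a) (at_right 0)"
      by (auto intro!: tendsto_eq_intros)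
    show "eventually (\<lambda>t. 0 \<le> a + t * b) (at_right 0)"
      using eventually_at_right_real[OF zero_less_one]
    proof eventually_elim
      case (elim t)
      have "z + t *\<^sub>R (u - z) = (1 - t) *\<^sub>R z + t *\<^sub>R u" by (simp add: algebra_simps)
      then have "z + t *\<^sub>R (u - z) \<in> X"
        using X elim by (auto intro: convexD_alt)
      from z_min[rule_format, OF this] have "0 \<le> t * (a + t * b)"
        unfolding expand by (simp add: algebra_simps)
      then show ?case
        using elim by (simp add: zero_le_mult_iff)
    qed
  qed simp
  then show ?thesis
    using expand[of 1] by (simp add: b_def)
qed

lemma convex_on_above_gradient_at_combination:
  fixes F :: "'a::real_inner \<Rightarrow> real"
  assumes F: "convex_on X F" and X: "convex X" "y0 \<in> X" "z0 \<in> X" "u \<in> X"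
    and a: "0 \<le> a" "a \<le> 1" and x: "x = a *\<^sub>R z0 + (1 - a) *\<^sub>R y0"
    and dF: "(F has_derivative (\<lambda>d. g \<bullet> d)) (at x within X)"
  shows "F x + a * (g \<bullet> (u - z0)) \<le> a * F u + (1 - a) * F y0"
proof -
  have "x \<in> X"
    using X a convexD_alt[OF X(1) X(2,3), of a] by (simp add: x add.commute)
  then have "a * (F x + g \<bullet> (u - x)) + (1 - a) * (F x + g \<bullet> (y0 - x)) \<le> a * F u + (1 - a) * F y0"
    using convex_on_imp_above_gradient[OF F X(1) _ _ dF] X a
    by (intro add_mono mult_left_mono) auto
  moreover have "a *\<^sub>R (u - z0) = a *\<^sub>R (u - x) + (1 - a) *\<^sub>R (y0 - x)"
    by (simp add: x algebra_simps)
  then have "a * (g \<bullet> (u - z0)) = a * (g \<bullet> (u - x)) + (1 - a) * (g \<bullet> (y0 - x))"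
    by (metis inner_add_right inner_scaleR_right)
  ultimately show ?thesis
    by (simp add: algebra_simps)
qed

lemma accelerated_prox_step_bound:
  fixes F :: "'a::real_inner \<Rightarrow> real"
  assumes X: "convex X" "y0 \<in> X" "z0 \<in> X" "xs \<in> X"
    and F: "convex_on X F"
    and dF: "\<And>v. v \<in> X \<Longrightarrow> (F has_derivative (\<lambda>d. g v \<bullet> d)) (at v within X)"
    and g: "\<And>v w. v \<in> X \<Longrightarrow> w \<in> X \<Longrightarrow> norm (g v - g w) \<le> M * norm (v - w)"
    and a: "0 \<le> a" "a \<le> 1" and x: "x = a *\<^sub>R z0 + (1 - a) *\<^sub>R y0"
    and y_min: "y \<in> X" "\<forall>v\<in>X. G \<bullet> (y - x) + \<beta> / 2 * (norm (y - x))\<^sup>2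
                              \<le> G \<bullet> (v - x) + \<beta> / 2 * (norm (v - x))\<^sup>2"
    and z_min: "z \<in> X" "\<forall>v\<in>X. G \<bullet> (z - x) + \<theta> / 2 * (norm (z - z0))\<^sup>2
                              \<le> G \<bullet> (v - x) + \<theta> / 2 * (norm (v - z0))\<^sup>2"
    and \<theta>: "\<theta> > 0" "a * \<beta> \<le> \<theta>" and M: "\<beta> - M > 0"
  shows "F y - F xs \<le> (1 - a) * (F y0 - F xs)
           + a * \<theta> * ((norm (xs - z0))\<^sup>2 / 2 - (norm (xs - z))\<^sup>2 / 2)
           + (norm (G - g x))\<^sup>2 / (2 * (\<beta> - M)) + a * ((G - g x) \<bullet> (xs - z0))"
proof -
  define w where "w = a *\<^sub>R z + (1 - a) *\<^sub>R y0"
  have "x \<in> X" "w \<in> X"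
    using X z_min a convexD_alt[OF X(1) X(2), of _ a] by (auto simp: x w_def add.commute)
  have w_x: "w - x = a *\<^sub>R (z - z0)"
    by (simp add: w_def x algebra_simps)
  have "F y \<le> F x + (G \<bullet> (w - x) + \<beta> / 2 * (norm (w - x))\<^sup>2)
                + (norm (G - g x))\<^sup>2 / (2 * (\<beta> - M))"
    using inexact_prox_gradient_step_bound[OF X(1) \<open>x \<in> X\<close> y_min(1) \<open>w \<in> X\<close> dF g M]
      y_min(2) \<open>w \<in> X\<close> by blast
  moreover have "G \<bullet> (w - x) + \<beta> / 2 * (norm (w - x))\<^sup>2
                  \<le> a * (G \<bullet> (z - z0) + \<theta> / 2 * (norm (z - z0))\<^sup>2)"
  proof -
    have "a * (a * \<beta>) \<le> a * \<theta>"
      using \<theta> a by (intro mult_left_mono)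
    then have "a * (a * \<beta>) * ((norm (z - z0))\<^sup>2 / 2) \<le> a * \<theta> * ((norm (z - z0))\<^sup>2 / 2)"
      by (rule mult_right_mono) simp
    moreover have "G \<bullet> (w - x) = a * (G \<bullet> (z - z0))" "(norm (w - x))\<^sup>2 = a\<^sup>2 * (norm (z - z0))\<^sup>2"
      by (simp_all add: w_x power_mult_distrib)
    ultimately show ?thesis
      by (simp add: power2_eq_square algebra_simps)
  qed
  moreover have "a * (G \<bullet> (z - z0) + \<theta> / 2 * (norm (z - z0))\<^sup>2)
      \<le> a * (G \<bullet> (xs - z0) + \<theta> * ((norm (xs - z0))\<^sup>2 / 2 - (norm (xs - z))\<^sup>2 / 2))"
    using prox_three_point_inequality[OF X(1) z_min(1) X(4) \<theta>(1) z_min(2)] a(1)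
    by (intro mult_left_mono) (simp_all add: algebra_simps norm_minus_commute)
  moreover have "F x + a * (g x \<bullet> (xs - z0)) \<le> a * F xs + (1 - a) * F y0"
    using convex_on_above_gradient_at_combination[OF F X a x dF[OF \<open>x \<in> X\<close>]] .
  ultimately show ?thesis
    by (simp add: algebra_simps)
qed

lemma smoothing_schedule_in_range:
  fixes c \<mu>\<^sub>0 :: real
  assumes "c > 0" "\<mu>\<^sub>0 > 0"
  shows "c * \<mu>\<^sub>0 / (real j + c) \<in> {0<..\<mu>\<^sub>0}"
  using assms by (simp add: field_simps mult_left_mono)

lemma smoothing_schedule_antimono:
  fixes c \<mu>\<^sub>0 :: real
  assumes "c > 0" "\<mu>\<^sub>0 > 0" "i \<le> j"
  shows "c * \<mu>\<^sub>0 / (real j + c) \<le> c * \<mu>\<^sub>0 / (real i + c)"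
  using assms by (simp add: frac_le)

theorem lemma5:
  fixes X :: "'a::euclidean_space set"
    and f h :: "'a \<Rightarrow> real" and grad_f :: "'a \<Rightarrow> 'a" and Lf :: real
    and th :: "real \<Rightarrow> 'a \<Rightarrow> real" and grad_th :: "real \<Rightarrow> 'a \<Rightarrow> 'a"
    and mubar kappa L :: real
    and Psi_grad :: "real \<Rightarrow> 'a \<Rightarrow> 'b \<Rightarrow> 'a"
    and N :: nat and m :: "nat \<Rightarrow> nat" and alpha beta theta mu :: "nat \<Rightarrow> real"
    and c mu0 :: real and xi :: "nat \<Rightarrow> nat \<Rightarrow> 'b"
    and x y z G :: "nat \<Rightarrow> 'a" and xs :: 'a and k :: nat
  assumes X: "X \<noteq> {}" "closed X" "convex X"
    and f_convex: "convex_on X f"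
    and f_grad: "\<And>u. u \<in> X \<Longrightarrow> (f has_derivative (\<lambda>d. grad_f u \<bullet> d)) (at u within X)"
    and f_Lip: "\<And>u v. u \<in> X \<Longrightarrow> v \<in> X \<Longrightarrow> norm (grad_f u - grad_f v) \<le> Lf * norm (u - v)"
    and h_convex: "convex_on X h"
    and mubar: "mubar > 0" and kappa: "kappa > 0" and L: "L > 0"
    and th_grad: "\<And>\<mu> u. \<mu> \<in> {0<..mubar} \<Longrightarrow> u \<in> X \<Longrightarrow>
        (th \<mu> has_derivative (\<lambda>d. grad_th \<mu> u \<bullet> d)) (at u within X)"
    and th_grad_cont: "\<And>\<mu>. \<mu> \<in> {0<..mubar} \<Longrightarrow> continuous_on X (grad_th \<mu>)"
    and th_convex: "\<And>\<mu>. \<mu> \<in> {0<..mubar} \<Longrightarrow> convex_on X (th \<mu>)"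
    and th_lim: "\<And>u. u \<in> X \<Longrightarrow>
        ((\<lambda>p. th (snd p) (fst p)) \<longlongrightarrow> h u) (at (u, 0) within X \<times> {0<..mubar})"
    and th_kappa: "\<And>u \<mu>1 \<mu>2. u \<in> X \<Longrightarrow> \<mu>1 \<in> {0<..mubar} \<Longrightarrow> \<mu>2 \<in> {0<..mubar} \<Longrightarrow>
        \<bar>th \<mu>2 u - th \<mu>1 u\<bar> \<le> kappa * \<bar>\<mu>1 - \<mu>2\<bar>"
    and th_Lip: "\<And>\<mu> u v. \<mu> \<in> {0<..mubar} \<Longrightarrow> u \<in> X \<Longrightarrow> v \<in> X \<Longrightarrow>
        norm (grad_th \<mu> u - grad_th \<mu> v) \<le> (L / \<mu>) * norm (u - v)"
    and N: "N \<ge> 1" and m: "\<And>j. m j \<ge> 1"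
    and alpha: "\<And>j. alpha j \<in> {0<..<1}" and c: "c > 0" and mu0: "mu0 \<in> {0<..mubar}"
    and beta: "\<And>j. beta j > 0" and theta: "\<And>j. theta j > 0"
    and z0: "z 0 = y 0" "y 0 \<in> X"
    and mu_def: "\<And>j. mu j = c * mu0 / (real j + c)"
    and x_def: "\<And>j. j \<in> {1..N} \<Longrightarrow> x j = alpha j *\<^sub>R z (j - 1) + (1 - alpha j) *\<^sub>R y (j - 1)"
    and G_def: "\<And>j. j \<in> {1..N} \<Longrightarrow>
        G j = (1 / real (m j)) *\<^sub>R (\<Sum>i\<in>{1..m j}. Psi_grad (mu j) (x j) (xi j i))"
    and y_def: "\<And>j. j \<in> {1..N} \<Longrightarrow> y j \<in> X \<and> (\<forall>v\<in>X.
        G j \<bullet> (y j - x j) + beta j / 2 * (norm (y j - x j))\<^sup>2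
          \<le> G j \<bullet> (v - x j) + beta j / 2 * (norm (v - x j))\<^sup>2)"
    and z_def: "\<And>j. j \<in> {1..N} \<Longrightarrow> z j \<in> X \<and> (\<forall>v\<in>X.
        G j \<bullet> (z j - x j) + theta j / 2 * (norm (z j - z (j - 1)))\<^sup>2
          \<le> G j \<bullet> (v - x j) + theta j / 2 * (norm (v - z (j - 1)))\<^sup>2)"
    and xs_opt: "xs \<in> X" "\<And>v. v \<in> X \<Longrightarrow> f xs + h xs \<le> f v + h v"
    and k: "1 \<le> k" "k \<le> N"
    and step1: "alpha k * beta k - theta k \<le> 0"
    and step2: "beta k - (Lf + L / mu k) > 0"
  shows "let psi = (\<lambda>\<mu> u. f u + th \<mu> u);
             grad_psi = (\<lambda>\<mu> u. grad_f u + grad_th \<mu> u);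
             delta = (\<lambda>j. G j - grad_psi (mu j) (x j));
             Dsq = (\<lambda>j. (norm (xs - z j))\<^sup>2 / 2);
             Delta = (\<lambda>j. psi (mu j) (y j) - psi (mu j) xs);
             Gamma = (\<lambda>j. Delta j - (1 - alpha j) * Delta (j - 1)
                          - 2 * kappa * (1 - alpha j) * (mu (j - 1) - mu j));
             Lk = Lf + L / mu k
         in Gamma k \<le> alpha k * theta k * (Dsq (k - 1) - Dsq k)
                     + (norm (delta k))\<^sup>2 / (2 * (beta k - Lk))
                     + alpha k * (delta k \<bullet> (xs - z (k - 1)))"
proof -
  define P where "P = (\<lambda>u. f u + th (mu k) u)"
  define gP where "gP = (\<lambda>u. grad_f u + grad_th (mu k) u)"
  have mu_range: "mu j \<in> {0<..mubar}" for j
    using smoothing_schedule_in_range[OF c, of mu0 j] mu0 by (auto simp: mu_def)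
  have mu_antimono: "mu k \<le> mu (k - 1)"
    using smoothing_schedule_antimono[OF c, of mu0 "k - 1" k] mu0 by (simp add: mu_def)
  have iterates_in_X: "y j \<in> X" "z j \<in> X" if "j \<le> N" for j
    using y_def[of j] z_def[of j] z0 that by (cases "j = 0"; simp)+
  have "convex_on X P"
    unfolding P_def by (rule convex_on_add[OF f_convex th_convex[OF mu_range]])
  moreover have "(P has_derivative (\<lambda>d. gP v \<bullet> d)) (at v within X)" if "v \<in> X" for v
    unfolding P_def gP_def inner_add_left
    by (rule has_derivative_add[OF f_grad[OF that] th_grad[OF mu_range that]])
  moreover have "norm (gP v - gP w) \<le> (Lf + L / mu k) * norm (v - w)" if "v \<in> X" "w \<in> X" for v w
    using norm_diff_triangle_ineq[of "grad_f v" "grad_th (mu k) v" "grad_f w" "grad_th (mu k) w"] f_Lip[OF that] th_Lip[OF mu_range[of k] that]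
    by (simp add: gP_def distrib_right)
  ultimately have one_step: "P (y k) - P xs \<le> (1 - alpha k) * (P (y (k - 1)) - P xs)
      + alpha k * theta k * ((norm (xs - z (k - 1)))\<^sup>2 / 2 - (norm (xs - z k))\<^sup>2 / 2)
      + (norm (G k - gP (x k)))\<^sup>2 / (2 * (beta k - (Lf + L / mu k)))
      + alpha k * ((G k - gP (x k)) \<bullet> (xs - z (k - 1)))"
    using k alpha[of k] theta[of k] step1 step2 x_def[of k] y_def[of k] z_def[of k]
    by (intro accelerated_prox_step_bound[OF X(3) iterates_in_X xs_opt(1)]) auto
  have "y (k - 1) \<in> X"
    using k by (intro iterates_in_X) simp
  have "P (y (k - 1)) - P xs \<le> f (y (k - 1)) + th (mu (k - 1)) (y (k - 1))
      - (f xs + th (mu (k - 1)) xs) + 2 * kappa * (mu (k - 1) - mu k)"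
    using th_kappa[OF \<open>y (k - 1) \<in> X\<close> mu_range mu_range, of "k - 1" k]
      th_kappa[OF xs_opt(1) mu_range mu_range, of "k - 1" k] mu_antimono k
    unfolding P_def by (simp add: abs_le_iff)
  from mult_left_mono[OF this, of "1 - alpha k"] one_step alpha[of k] show ?thesis
    unfolding Let_def P_def gP_def by (simp add: algebra_simps)
qed

end
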